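(* Let $X,Y$ be Hausdorff spaces with continuous $k$-means $\mu$ on $X$ and $\nu$ on $Y$, and let $g:X\to Y$ be a continuous $k$-mean homomorphism. (i) If $\mu$ and $\nu$ $\beta$-extend to $(k+1)$-means $\tilde\mu$ and $\tilde\nu$ respectively, then $g$ is a $(k+1)$-mean homomorphism from $(X,\tilde\mu)$ to $(Y,\tilde\nu)$. (ii) If $g$ is surjective and $\mu$ $\beta$-extends to a $(k+1)$-mean $\tilde\mu$, then $\nu$ $\beta$-extends to a $(k+1)$-mean $\tilde\nu$, and $g$ is then a $(k+1)$-mean homomorphism from $(X,\tilde\mu)$ to $(Y,\tilde\nu)$.
   Context: A $k$-mean is a map $\mu:X^k\to X$ with $\mu(x,\ldots,x)=x$. A map $g:X\to Y$ is a $k$-mean homomorphism from $(X,\mu)$ to $(Y,\nu)$ if $g\circ\mu=\nu\circ g_k$, where $g_k(x_1,\ldots,x_k)=(g(x_1),\ldots,g(x_k))$. Barycentric operator of a $k$-mean $\mu$: $\beta_\mu(\mathbf{x})_j=\mu(x_1,\ldots,\widehat{x_j},\ldots,x_{k+1})$ on $X^{k+1}$; a $(k+1)$-mean $\tilde\mu$ is a $\beta$-extension of $\mu$ if $\beta_\mu^n(\mathbf{x})\to(\tilde\mu(\mathbf{x}),\ldots,\tilde\mu(\mathbf{x}))$ for every $\mathbf{x}\in X^{k+1}$. *)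

theory Defs
  imports "HOL-Analysis.Analysis"
begin

text \<open>Tuples in X^k are extensional functions on the index set {..<k}
  (elements of PiE {..<k} (\<lambda>_. topspace X)); X^k carries the product topology.\<close>

definition kmean :: "'a topology \<Rightarrow> nat \<Rightarrow> ((nat \<Rightarrow> 'a) \<Rightarrow> 'a) \<Rightarrow> bool" where
  "kmean X k \<mu> \<longleftrightarrow>
     (\<forall>x\<in>PiE {..<k} (\<lambda>_. topspace X). \<mu> x \<in> topspace X) \<and>
     (\<forall>x\<in>topspace X. \<mu> (\<lambda>i\<in>{..<k}. x) = x)"

definition kmean_hom ::
  "'a topology \<Rightarrow> 'b topology \<Rightarrow> nat \<Rightarrow> ((nat \<Rightarrow> 'a) \<Rightarrow> 'a) \<Rightarrow> ((nat \<Rightarrow> 'b) \<Rightarrow> 'b)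
     \<Rightarrow> ('a \<Rightarrow> 'b) \<Rightarrow> bool" where
  "kmean_hom X Y k \<mu> \<nu> g \<longleftrightarrow>
     (\<forall>x\<in>topspace X. g x \<in> topspace Y) \<and>
     (\<forall>x\<in>PiE {..<k} (\<lambda>_. topspace X). g (\<mu> x) = \<nu> (\<lambda>i\<in>{..<k}. g (x i)))"

text \<open>Barycentric operator: the j-th coordinate is \<mu> applied to x with the j-th entry removed.\<close>
definition barycentric :: "nat \<Rightarrow> ((nat \<Rightarrow> 'a) \<Rightarrow> 'a) \<Rightarrow> (nat \<Rightarrow> 'a) \<Rightarrow> (nat \<Rightarrow> 'a)" where
  "barycentric k \<mu> x =
     (\<lambda>j\<in>{..<Suc k}. \<mu> (\<lambda>i\<in>{..<k}. if i < j then x i else x (Suc i)))"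

definition beta_extension ::
  "'a topology \<Rightarrow> nat \<Rightarrow> ((nat \<Rightarrow> 'a) \<Rightarrow> 'a) \<Rightarrow> ((nat \<Rightarrow> 'a) \<Rightarrow> 'a) \<Rightarrow> bool" where
  "beta_extension X k \<mu> \<mu>' \<longleftrightarrow>
     kmean X (Suc k) \<mu>' \<and>
     (\<forall>x\<in>PiE {..<Suc k} (\<lambda>_. topspace X).
        limitin (product_topology (\<lambda>_. X) {..<Suc k})
          (\<lambda>n. (barycentric k \<mu> ^^ n) x) (\<lambda>j\<in>{..<Suc k}. \<mu>' x) sequentially)"

end

theory Submission
  imports Defs
begin

(* Writing g_m for the coordinatewise map compose {..<m} g, the homomorphism property of g makes
  it conjugate the barycentric operators: beta_nu o g_(k+1) = g_(k+1) o beta_mu. Pushing the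
  convergent orbit beta_mu^n x --> (mu' x, ..., mu' x) forward by the continuous map g_(k+1)
  therefore shows that the orbit of g_(k+1) x converges to the constant tuple g (mu' x).
  Part (i) follows because limits in the Hausdorff product Y^(k+1) are unique. For part (ii),
  every tuple of Y is g_(k+1) of a tuple of X, so nu' y := g (mu' x) for any preimage x of y is a
  beta-extension of nu; it is a mean because beta_nu fixes constant tuples. *)

lemma compose_in_PiE:
  assumes "g ` A \<subseteq> B" "x \<in> PiE I (\<lambda>_. A)"
  shows "compose I g x \<in> PiE I (\<lambda>_. B)"
  using assms by (auto simp: compose_def PiE_iff)

lemma PiE_compose_inv_into:
  assumes "g ` A = B" "y \<in> PiE I (\<lambda>_. B)"
  shows "compose I (inv_into A g) y \<in> PiE I (\<lambda>_. A)"
    and "compose I g (compose I (inv_into A g) y) = y"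
proof -
  have y: "\<And>i. i \<in> I \<Longrightarrow> y i \<in> g ` A"
    using assms by (auto simp: PiE_iff)
  then show "compose I (inv_into A g) y \<in> PiE I (\<lambda>_. A)"
    by (auto simp: compose_def inv_into_into)
  have "compose I g (compose I (inv_into A g) y) = restrict y I"
    unfolding compose_def by (intro restrict_ext) (simp add: y f_inv_into_f)
  also have "\<dots> = y"
    using assms(2) by (rule PiE_restrict)
  finally show "compose I g (compose I (inv_into A g) y) = y" .
qed

lemma continuous_map_product_compose:
  assumes "continuous_map X Y g"
  shows "continuous_map (product_topology (\<lambda>_. X) I) (product_topology (\<lambda>_. Y) I) (compose I g)"
  unfolding continuous_map_componentwise
proof (intro conjI ballI)
  fix j assume "j \<in> I"
  then have "continuous_map (product_topology (\<lambda>_. X) I) Y (g \<circ> (\<lambda>x. x j))"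
    by (rule continuous_map_compose[OF continuous_map_product_projection[where X = "\<lambda>_. X"] assms])
  with \<open>j \<in> I\<close> show "continuous_map (product_topology (\<lambda>_. X) I) Y (\<lambda>x. compose I g x j)"
    by (simp add: compose_eq o_def)
qed auto

lemma limitin_constant_tuple_unique:
  assumes "Hausdorff_space X" "i \<in> I" "\<not> trivial_limit F"
    and "limitin (product_topology (\<lambda>_. X) I) f (\<lambda>j\<in>I. a) F"
    and "limitin (product_topology (\<lambda>_. X) I) f (\<lambda>j\<in>I. b) F"
  shows "a = b"
proof -
  have "Hausdorff_space (product_topology (\<lambda>_. X) I)"
    using assms(1) by (simp add: Hausdorff_space_product_topology)
  then have "(\<lambda>j\<in>I. a) = (\<lambda>j\<in>I. b)"
    by (rule limitin_Hausdorff_unique[OF assms(4,5,3)])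
  then show "a = b"
    using assms(2) by (metis restrict_apply')
qed

lemma barycentric_in_PiE:
  assumes "kmean X k \<mu>" "x \<in> PiE {..<Suc k} (\<lambda>_. topspace X)"
  shows "barycentric k \<mu> x \<in> PiE {..<Suc k} (\<lambda>_. topspace X)"
  using assms unfolding kmean_def barycentric_def by (auto simp: PiE_iff)

lemma funpow_barycentric_in_PiE:
  assumes "kmean X k \<mu>" "x \<in> PiE {..<Suc k} (\<lambda>_. topspace X)"
  shows "(barycentric k \<mu> ^^ n) x \<in> PiE {..<Suc k} (\<lambda>_. topspace X)"
  by (induction n) (auto simp: assms barycentric_in_PiE)

lemma barycentric_const:
  assumes "kmean X k \<mu>" "a \<in> topspace X"
  shows "barycentric k \<mu> (\<lambda>j\<in>{..<Suc k}. a) = (\<lambda>j\<in>{..<Suc k}. a)"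
proof -
  have "(\<lambda>i\<in>{..<k}. if i < j then (\<lambda>j\<in>{..<Suc k}. a) i else (\<lambda>j\<in>{..<Suc k}. a) (Suc i))
      = (\<lambda>i\<in>{..<k}. a)" for j
    by (intro restrict_ext) auto
  then show ?thesis
    using assms unfolding barycentric_def kmean_def by simp
qed

lemma funpow_barycentric_const:
  assumes "kmean X k \<mu>" "a \<in> topspace X"
  shows "(barycentric k \<mu> ^^ n) (\<lambda>j\<in>{..<Suc k}. a) = (\<lambda>j\<in>{..<Suc k}. a)"
  by (induction n) (simp_all only: funpow.simps o_apply id_apply barycentric_const[OF assms])

lemma barycentric_compose:
  assumes "kmean_hom X Y k \<mu> \<nu> g" "x \<in> PiE {..<Suc k} (\<lambda>_. topspace X)"
  shows "barycentric k \<nu> (compose {..<Suc k} g x) = compose {..<Suc k} g (barycentric k \<mu> x)"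
proof -
  have "\<nu> (\<lambda>i\<in>{..<k}. if i < j then compose {..<Suc k} g x i else compose {..<Suc k} g x (Suc i))
      = g (\<mu> (\<lambda>i\<in>{..<k}. if i < j then x i else x (Suc i)))" if "j < Suc k" for j
  proof -
    let ?z = "\<lambda>i\<in>{..<k}. if i < j then x i else x (Suc i)"
    have "?z \<in> PiE {..<k} (\<lambda>_. topspace X)"
      using assms(2) by (auto simp: PiE_iff)
    moreover have "(\<lambda>i\<in>{..<k}. if i < j then compose {..<Suc k} g x i else compose {..<Suc k} g x (Suc i))
        = (\<lambda>i\<in>{..<k}. g (?z i))"
      by (intro restrict_ext) (auto simp: compose_eq)
    ultimately show ?thesis
      using assms(1) unfolding kmean_hom_def by simp
  qed
  then show ?thesis
    unfolding barycentric_def compose_def by (intro restrict_ext) simp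
qed

lemma funpow_barycentric_compose:
  assumes "kmean X k \<mu>" "kmean_hom X Y k \<mu> \<nu> g" "x \<in> PiE {..<Suc k} (\<lambda>_. topspace X)"
  shows "(barycentric k \<nu> ^^ n) (compose {..<Suc k} g x)
       = compose {..<Suc k} g ((barycentric k \<mu> ^^ n) x)"
  by (induction n)
    (simp_all add: barycentric_compose[OF assms(2) funpow_barycentric_in_PiE[OF assms(1,3)]])

lemma beta_extensionD:
  assumes "beta_extension X k \<mu> \<mu>'"
  shows "kmean X (Suc k) \<mu>'"
    and "x \<in> PiE {..<Suc k} (\<lambda>_. topspace X) \<Longrightarrow>
      limitin (product_topology (\<lambda>_. X) {..<Suc k})
        (\<lambda>n. (barycentric k \<mu> ^^ n) x) (\<lambda>j\<in>{..<Suc k}. \<mu>' x) sequentially"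
  using assms unfolding beta_extension_def by blast+

lemma limitin_funpow_barycentric_compose:
  assumes "kmean X k \<mu>" "kmean_hom X Y k \<mu> \<nu> g" "continuous_map X Y g"
    and "beta_extension X k \<mu> \<mu>'" and x: "x \<in> PiE {..<Suc k} (\<lambda>_. topspace X)"
  shows "limitin (product_topology (\<lambda>_. Y) {..<Suc k})
      (\<lambda>n. (barycentric k \<nu> ^^ n) (compose {..<Suc k} g x))
      (\<lambda>j\<in>{..<Suc k}. g (\<mu>' x)) sequentially"
proof -
  have "limitin (product_topology (\<lambda>_. Y) {..<Suc k})
      (compose {..<Suc k} g \<circ> (\<lambda>n. (barycentric k \<mu> ^^ n) x))
      (compose {..<Suc k} g (\<lambda>j\<in>{..<Suc k}. \<mu>' x)) sequentially"
    by (rule continuous_map_limit[OF continuous_map_product_compose[OF assms(3)]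
          beta_extensionD(2)[OF assms(4) x]])
  moreover have "compose {..<Suc k} g (\<lambda>j\<in>{..<Suc k}. \<mu>' x) = (\<lambda>j\<in>{..<Suc k}. g (\<mu>' x))"
    unfolding compose_def by (intro restrict_ext) simp
  ultimately show ?thesis
    by (simp only: o_def funpow_barycentric_compose[OF assms(1,2) x])
qed

lemma kmean_hom_beta_extension:
  assumes "Hausdorff_space Y" "kmean X k \<mu>" "continuous_map X Y g" "kmean_hom X Y k \<mu> \<nu> g"
    and "beta_extension X k \<mu> \<mu>'" "beta_extension Y k \<nu> \<nu>'"
  shows "kmean_hom X Y (Suc k) \<mu>' \<nu>' g"
  unfolding kmean_hom_def
proof (intro conjI ballI)
  fix x assume "x \<in> topspace X"
  then show "g x \<in> topspace Y"
    using assms(3) by (simp add: continuous_map_def Pi_iff)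
next
  fix x assume x: "x \<in> PiE {..<Suc k} (\<lambda>_. topspace X)"
  have gx: "compose {..<Suc k} g x \<in> PiE {..<Suc k} (\<lambda>_. topspace Y)"
    by (rule compose_in_PiE[OF continuous_map_image_subset_topspace[OF assms(3)] x])
  have "g (\<mu>' x) = \<nu>' (compose {..<Suc k} g x)"
    by (rule limitin_constant_tuple_unique[where i = 0, OF assms(1) _ trivial_limit_sequentially
          limitin_funpow_barycentric_compose[OF assms(2,4,3,5) x] beta_extensionD(2)[OF assms(6) gx]])
      simp
  then show "g (\<mu>' x) = \<nu>' (\<lambda>i\<in>{..<Suc k}. g (x i))"
    by (simp only: compose_def)
qed

lemma beta_extension_surjective_hom:
  assumes "Hausdorff_space Y" "kmean X k \<mu>" "kmean Y k \<nu>" "continuous_map X Y g"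
    and "kmean_hom X Y k \<mu> \<nu> g" and surj: "g ` topspace X = topspace Y"
    and "beta_extension X k \<mu> \<mu>'"
  shows "beta_extension Y k \<nu> (\<lambda>y. g (\<mu>' (compose {..<Suc k} (inv_into (topspace X) g) y)))"
    (is "beta_extension Y k \<nu> ?\<nu>'")
proof -
  let ?pre = "compose {..<Suc k} (inv_into (topspace X) g)"
  have lim: "limitin (product_topology (\<lambda>_. Y) {..<Suc k})
      (\<lambda>n. (barycentric k \<nu> ^^ n) y) (\<lambda>j\<in>{..<Suc k}. ?\<nu>' y) sequentially"
    if y: "y \<in> PiE {..<Suc k} (\<lambda>_. topspace Y)" for y
    using limitin_funpow_barycentric_compose[OF assms(2,5,4,7) PiE_compose_inv_into(1)[OF surj y]]
    by (simp only: PiE_compose_inv_into(2)[OF surj y])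
  have "kmean Y (Suc k) ?\<nu>'"
    unfolding kmean_def
  proof (intro conjI ballI)
    fix y assume "y \<in> PiE {..<Suc k} (\<lambda>_. topspace Y)"
    then have "?pre y \<in> PiE {..<Suc k} (\<lambda>_. topspace X)"
      by (rule PiE_compose_inv_into(1)[OF surj])
    then have "\<mu>' (?pre y) \<in> topspace X"
      using beta_extensionD(1)[OF assms(7)] unfolding kmean_def by blast
    then show "?\<nu>' y \<in> topspace Y"
      using assms(4) by (simp add: continuous_map_def Pi_iff)
  next
    fix a assume a: "a \<in> topspace Y"
    then have const: "(\<lambda>j\<in>{..<Suc k}. a) \<in> PiE {..<Suc k} (\<lambda>_. topspace Y)"
      by simp
    have const_lim: "limitin (product_topology (\<lambda>_. Y) {..<Suc k})
        (\<lambda>n. (barycentric k \<nu> ^^ n) (\<lambda>j\<in>{..<Suc k}. a)) (\<lambda>j\<in>{..<Suc k}. a) sequentially"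
      using const by (simp add: funpow_barycentric_const[OF assms(3) a])
    show "?\<nu>' (\<lambda>j\<in>{..<Suc k}. a) = a"
      by (rule limitin_constant_tuple_unique[where i = 0, OF assms(1) _ trivial_limit_sequentially
            lim[OF const] const_lim])
        simp
  qed
  with lim show ?thesis
    unfolding beta_extension_def by blast
qed

theorem proposition7p2:
  fixes X :: "'a topology" and Y :: "'b topology" and k :: nat
    and \<mu> :: "(nat \<Rightarrow> 'a) \<Rightarrow> 'a" and \<nu> :: "(nat \<Rightarrow> 'b) \<Rightarrow> 'b" and g :: "'a \<Rightarrow> 'b"
  assumes "Hausdorff_space X" and "Hausdorff_space Y"
    and "kmean X k \<mu>" and "continuous_map (product_topology (\<lambda>_. X) {..<k}) X \<mu>"
    and "kmean Y k \<nu>" and "continuous_map (product_topology (\<lambda>_. Y) {..<k}) Y \<nu>"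
    and "continuous_map X Y g" and "kmean_hom X Y k \<mu> \<nu> g"
  shows "(\<forall>\<mu>' \<nu>'. beta_extension X k \<mu> \<mu>' \<and> beta_extension Y k \<nu> \<nu>'
            \<longrightarrow> kmean_hom X Y (Suc k) \<mu>' \<nu>' g)
       \<and> (\<forall>\<mu>'. g ` topspace X = topspace Y \<and> beta_extension X k \<mu> \<mu>'
            \<longrightarrow> (\<exists>\<nu>'. beta_extension Y k \<nu> \<nu>' \<and> kmean_hom X Y (Suc k) \<mu>' \<nu>' g))"
proof (intro conjI allI impI; elim conjE)
  fix \<mu>' \<nu>' assume "beta_extension X k \<mu> \<mu>'" "beta_extension Y k \<nu> \<nu>'"
  then show "kmean_hom X Y (Suc k) \<mu>' \<nu>' g"
    by (rule kmean_hom_beta_extension[OF assms(2,3,7,8)])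
next
  fix \<mu>' assume "g ` topspace X = topspace Y" "beta_extension X k \<mu> \<mu>'"
  then obtain \<nu>' where "beta_extension Y k \<nu> \<nu>'"
    using beta_extension_surjective_hom[OF assms(2,3,5,7,8)] by blast
  with \<open>beta_extension X k \<mu> \<mu>'\<close> show "\<exists>\<nu>'. beta_extension Y k \<nu> \<nu>' \<and> kmean_hom X Y (Suc k) \<mu>' \<nu>' g"
    using kmean_hom_beta_extension[OF assms(2,3,7,8)] by blast
qed

end
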